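(* For all $r,s\ge1$, as an identity of polynomials in $q$, $$\sum_{C\ \text{maximal}}(q-1)^{r+s-l(C)-1}=\sum_{m=0}^{\min(r-1,s-1)}\binom{r-1}{m}\binom{s-1}{m}q^{m},$$ where the sum runs over all maximal cells $C$ for $(r,s)$.
   Context: A cell (for given $r,s$) is a finite (possibly empty) sequence of distinct pairs $(i_1,j_1),\dots,(i_l,j_l)$ with $1\le i_k\le r$, $1\le j_k\le s$, $i_1\le\cdots\le i_l$ and $j_1\le\cdots\le j_l$; $l(C)=l$ is its length. The cell is maximal if $\{i_1,\dots,i_l\}=\{1,\dots,r\}$ and $\{j_1,\dots,j_l\}=\{1,\dots,s\}$. *)

theory Defs
  imports "HOL-Computational_Algebra.Polynomial"
begin

definition is_cell :: "nat \<Rightarrow> nat \<Rightarrow> (nat \<times> nat) list \<Rightarrow> bool" where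
  "is_cell r s C \<longleftrightarrow> distinct C
     \<and> (\<forall>(i, j) \<in> set C. 1 \<le> i \<and> i \<le> r \<and> 1 \<le> j \<and> j \<le> s)
     \<and> sorted (map fst C) \<and> sorted (map snd C)"

definition is_maximal_cell :: "nat \<Rightarrow> nat \<Rightarrow> (nat \<times> nat) list \<Rightarrow> bool" where
  "is_maximal_cell r s C \<longleftrightarrow> is_cell r s C
     \<and> fst ` set C = {1..r} \<and> snd ` set C = {1..s}"

end

theory Submission
  imports Defs
begin

text \<open>The last pair of a maximal cell for (r, s) is the corner (r, s), and deleting it leaves a
  maximal cell for (r - 1, s), (r, s - 1) or (r - 1, s - 1); conversely the corner can be appended
  to any of these. Hence the weighted count P r s of the maximal cells satisfies
  P (r+1) (s+1) = P r (s+1) + P (r+1) s + (q - 1) P r s. By Pascal's rule the coefficients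
  of the right-hand side satisfy the same recurrence with the same boundary values.\<close>

lemma nat_grid_induct [case_names zero_zero Suc_zero zero_Suc Suc_Suc]:
  assumes "P 0 0"
    and "\<And>r. P r 0 \<Longrightarrow> P (Suc r) 0"
    and "\<And>s. P 0 s \<Longrightarrow> P 0 (Suc s)"
    and "\<And>r s. P r (Suc s) \<Longrightarrow> P (Suc r) s \<Longrightarrow> P r s \<Longrightarrow> P (Suc r) (Suc s)"
  shows "P r s"
proof (induction r arbitrary: s)
  case 0
  show ?case by (induction s) (use assms in auto)
next
  case (Suc r)
  show ?case by (induction s) (use assms Suc in auto)
qed

lemma sorted_pairs_corner_mem:
  assumes "sorted (map fst C)" "sorted (map snd C)"
    and "(a, j) \<in> set C" "(i, b) \<in> set C"
    and "\<forall>p \<in> set C. fst p \<le> a \<and> snd p \<le> b"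
  shows "(a, b) \<in> set C"
proof -
  obtain p q where p: "p < length C" "C ! p = (a, j)" and q: "q < length C" "C ! q = (i, b)"
    using assms(3,4) by (metis in_set_conv_nth)
  show ?thesis
  proof (cases "p \<le> q")
    case True
    then have "a \<le> i" using sorted_nth_mono[OF assms(1), of p q] p q by simp
    then show ?thesis using assms(4,5) by force
  next
    case False
    then have "b \<le> j" using sorted_nth_mono[OF assms(2), of q p] p q by simp
    then show ?thesis using assms(3,5) by force
  qed
qed

lemma maximal_cells_0_left: "{C. is_maximal_cell 0 s C} = (if s = 0 then {[]} else {})"
  by (auto simp: is_maximal_cell_def is_cell_def)

lemma maximal_cells_0_right: "{C. is_maximal_cell r 0 C} = (if r = 0 then {[]} else {})"
  by (auto simp: is_maximal_cell_def is_cell_def)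

lemma is_maximal_cell_dims_unique:
  "is_maximal_cell r s C \<Longrightarrow> is_maximal_cell r' s' C \<Longrightarrow> r = r' \<and> s = s'"
  unfolding is_maximal_cell_def by (metis card_atLeastAtMost diff_Suc_1)

lemma is_maximal_cell_snoc_corner:
  assumes "is_maximal_cell r (Suc s) C \<or> is_maximal_cell (Suc r) s C \<or> is_maximal_cell r s C"
  shows "is_maximal_cell (Suc r) (Suc s) (C @ [(Suc r, Suc s)])"
  using assms unfolding is_maximal_cell_def is_cell_def
  by (elim disjE) (auto simp: sorted_append atLeastAtMostSuc_conv image_iff)

lemma interval_between_Suc:
  assumes "{1..n} \<subseteq> A" "A \<subseteq> {1..Suc n}"
  obtains m where "A = {1..m}" "m \<in> {n, Suc n}"
proof (cases "Suc n \<in> A")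
  case True
  with assms have "A = {1..Suc n}" by (auto simp: atLeastAtMostSuc_conv)
  then show ?thesis using that by blast
next
  case False
  with assms have "A = {1..n}" by (auto simp: atLeastAtMostSuc_conv)
  then show ?thesis using that by blast
qed

lemma is_maximal_cell_snocD:
  assumes "is_maximal_cell (Suc r) (Suc s) (C @ [x])"
  shows "x = (Suc r, Suc s)"
    and "is_maximal_cell r (Suc s) C \<or> is_maximal_cell (Suc r) s C \<or> is_maximal_cell r s C"
proof -
  have cell: "is_cell (Suc r) (Suc s) (C @ [x])"
    and F: "fst ` set (C @ [x]) = {1..Suc r}" and G: "snd ` set (C @ [x]) = {1..Suc s}"
    using assms by (auto simp: is_maximal_cell_def)
  have sorted: "sorted (map fst C)" "sorted (map snd C)"
    and below: "\<forall>p \<in> set C. fst p \<le> fst x \<and> snd p \<le> snd x"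
    and bounded: "\<forall>p \<in> set (C @ [x]). fst p \<le> Suc r \<and> snd p \<le> Suc s"
    and x_notin: "x \<notin> set C"
    using cell by (auto simp: is_cell_def sorted_append)
  have "Suc r \<in> fst ` set (C @ [x])" "Suc s \<in> snd ` set (C @ [x])"
    unfolding F G by simp_all
  then have "Suc r \<le> fst x" "Suc s \<le> snd x"
    using below by auto
  with bounded show x: "x = (Suc r, Suc s)"
    by (simp add: prod_eq_iff)
  obtain a where a: "fst ` set C = {1..a}" "a \<in> {r, Suc r}"
  proof (rule interval_between_Suc)
    show "{1..r} \<subseteq> fst ` set C"
    proof
      fix i assume i: "i \<in> {1..r}"
      have "i \<in> fst ` set (C @ [x])" using i F by auto
      moreover have "i \<noteq> fst x" using i x by auto
      ultimately show "i \<in> fst ` set C" by auto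
    qed
    show "fst ` set C \<subseteq> {1..Suc r}" using F by auto
  qed
  obtain b where b: "snd ` set C = {1..b}" "b \<in> {s, Suc s}"
  proof (rule interval_between_Suc)
    show "{1..s} \<subseteq> snd ` set C"
    proof
      fix i assume i: "i \<in> {1..s}"
      have "i \<in> snd ` set (C @ [x])" using i G by auto
      moreover have "i \<noteq> snd x" using i x by auto
      ultimately show "i \<in> snd ` set C" by auto
    qed
    show "snd ` set C \<subseteq> {1..Suc s}" using G by auto
  qed
  have "(a, b) \<noteq> (Suc r, Suc s)"
  proof
    assume "(a, b) = (Suc r, Suc s)"
    then have "Suc r \<in> fst ` set C" "Suc s \<in> snd ` set C" using a(1) b(1) by auto
    then obtain p q where "p \<in> set C" "fst p = Suc r" "q \<in> set C" "snd q = Suc s"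
      by (metis imageE)
    then have "(Suc r, snd p) \<in> set C" "(fst q, Suc s) \<in> set C"
      by (metis prod.collapse)+
    then have "(Suc r, Suc s) \<in> set C"
      by (rule sorted_pairs_corner_mem[OF sorted]) (use below x in auto)
    with x x_notin show False by simp
  qed
  moreover have "is_cell a b C"
  proof -
    have "1 \<le> i \<and> i \<le> a \<and> 1 \<le> j \<and> j \<le> b" if "(i, j) \<in> set C" for i j
      using that a(1) b(1) by (metis atLeastAtMost_iff fst_conv snd_conv image_eqI)
    then show ?thesis using cell sorted by (auto simp: is_cell_def)
  qed
  ultimately show "is_maximal_cell r (Suc s) C \<or> is_maximal_cell (Suc r) s C \<or> is_maximal_cell r s C"
    using a b by (auto simp: is_maximal_cell_def)
qed

text \<open>The empty list is the unique maximal cell for (0, 0), so this covers the boundary too.\<close>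

lemma maximal_cells_Suc_Suc:
  "{C. is_maximal_cell (Suc r) (Suc s) C} = (\<lambda>C. C @ [(Suc r, Suc s)]) `
     ({C. is_maximal_cell r (Suc s) C} \<union> {C. is_maximal_cell (Suc r) s C} \<union> {C. is_maximal_cell r s C})"
proof (intro equalityI subsetI)
  fix C assume C: "C \<in> {C. is_maximal_cell (Suc r) (Suc s) C}"
  then have "C \<noteq> []" by (auto simp: is_maximal_cell_def)
  then obtain C' x where C': "C = C' @ [x]" by (metis rev_exhaust)
  with C have M: "is_maximal_cell (Suc r) (Suc s) (C' @ [x])" by simp
  show "C \<in> (\<lambda>C. C @ [(Suc r, Suc s)]) `
     ({C. is_maximal_cell r (Suc s) C} \<union> {C. is_maximal_cell (Suc r) s C} \<union> {C. is_maximal_cell r s C})"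
    unfolding C' is_maximal_cell_snocD(1)[OF M] using is_maximal_cell_snocD(2)[OF M] by blast
qed (auto intro: is_maximal_cell_snoc_corner)

lemma finite_maximal_cells: "finite {C. is_maximal_cell r s C}"
  by (induction r s rule: nat_grid_induct)
    (simp_all add: maximal_cells_Suc_Suc maximal_cells_0_left maximal_cells_0_right)

lemma length_maximal_cell_le: "is_maximal_cell r s C \<Longrightarrow> length C \<le> r + s - 1"
proof (induction r s arbitrary: C rule: nat_grid_induct)
  case (Suc_Suc r s)
  have "C \<in> {C. is_maximal_cell (Suc r) (Suc s) C}" using Suc_Suc.prems by simp
  then obtain C' where C: "C = C' @ [(Suc r, Suc s)]"
    and "is_maximal_cell r (Suc s) C' \<or> is_maximal_cell (Suc r) s C' \<or> is_maximal_cell r s C'"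
    unfolding maximal_cells_Suc_Suc by blast
  then have "length C' \<le> r + s" using Suc_Suc.IH by fastforce
  then show ?case unfolding C by simp
qed (metis empty_iff le0 list.size(3) maximal_cells_0_left maximal_cells_0_right mem_Collect_eq
    singletonD)+

lemma sum_maximal_cells_Suc_Suc:
  "(\<Sum>C | is_maximal_cell (Suc r) (Suc s) C. f C)
     = (\<Sum>C | is_maximal_cell r (Suc s) C. f (C @ [(Suc r, Suc s)]))
     + (\<Sum>C | is_maximal_cell (Suc r) s C. f (C @ [(Suc r, Suc s)]))
     + (\<Sum>C | is_maximal_cell r s C. f (C @ [(Suc r, Suc s)]))"
proof -
  have disjoint: "{C. is_maximal_cell a b C} \<inter> {C. is_maximal_cell a' b' C} = {}"
    if "(a, b) \<noteq> (a', b')" for a b a' b'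
    using that is_maximal_cell_dims_unique by blast
  show ?thesis
    unfolding maximal_cells_Suc_Suc
    by (simp add: sum.reindex inj_on_def sum.union_disjoint Int_Un_distrib2 finite_maximal_cells
        disjoint)
qed

definition maximal_cell_poly :: "nat \<Rightarrow> nat \<Rightarrow> int poly" where
  "maximal_cell_poly r s = (\<Sum>C | is_maximal_cell r s C. [:-1, 1:] ^ (r + s - length C - 1))"

lemma maximal_cell_poly_1_1: "maximal_cell_poly (Suc 0) (Suc 0) = 1"
  unfolding maximal_cell_poly_def sum_maximal_cells_Suc_Suc
  by (simp add: maximal_cells_0_left maximal_cells_0_right)

lemma maximal_cell_poly_Suc_1:
  "maximal_cell_poly (Suc (Suc r)) (Suc 0) = maximal_cell_poly (Suc r) (Suc 0)"
  unfolding maximal_cell_poly_def sum_maximal_cells_Suc_Suc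
  by (simp add: maximal_cells_0_right)

lemma maximal_cell_poly_1_Suc:
  "maximal_cell_poly (Suc 0) (Suc (Suc s)) = maximal_cell_poly (Suc 0) (Suc s)"
  unfolding maximal_cell_poly_def sum_maximal_cells_Suc_Suc
  by (simp add: maximal_cells_0_left)

text \<open>This fails at (1, 1): there the exponent of the empty cell for (0, 0) is truncated to 0.\<close>

lemma maximal_cell_poly_Suc_Suc:
  "maximal_cell_poly (Suc (Suc r)) (Suc (Suc s)) = maximal_cell_poly (Suc r) (Suc (Suc s))
     + maximal_cell_poly (Suc (Suc r)) (Suc s) + [:-1, 1:] * maximal_cell_poly (Suc r) (Suc s)"
proof -
  have shift: "[:-1, 1:] ^ (Suc r + Suc s - length C)
      = [:-1, 1:] * [:-1, 1:] ^ (Suc r + Suc s - length C - 1)"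
    if "C \<in> {C. is_maximal_cell (Suc r) (Suc s) C}" for C :: "(nat \<times> nat) list"
  proof -
    have "length C \<le> Suc r + Suc s - 1" using that length_maximal_cell_le by blast
    then have "Suc r + Suc s - length C = Suc (Suc r + Suc s - length C - 1)" by simp
    then show ?thesis by (metis power_Suc)
  qed
  have "maximal_cell_poly (Suc (Suc r)) (Suc (Suc s)) = maximal_cell_poly (Suc r) (Suc (Suc s))
      + maximal_cell_poly (Suc (Suc r)) (Suc s)
      + (\<Sum>C | is_maximal_cell (Suc r) (Suc s) C. [:-1, 1:] ^ (Suc r + Suc s - length C))"
    unfolding maximal_cell_poly_def sum_maximal_cells_Suc_Suc[where r = "Suc r" and s = "Suc s"]
    by simp
  also have "(\<Sum>C | is_maximal_cell (Suc r) (Suc s) C. [:-1, 1:] ^ (Suc r + Suc s - length C))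
      = [:-1, 1:] * maximal_cell_poly (Suc r) (Suc s)"
    unfolding maximal_cell_poly_def sum_distrib_left by (rule sum.cong[OF refl shift])
  finally show ?thesis .
qed

lemma coeff_maximal_cell_poly:
  "coeff (maximal_cell_poly (Suc r) (Suc s)) m = int (r choose m) * int (s choose m)"
proof (induction r s arbitrary: m rule: nat_grid_induct)
  case zero_zero
  show ?case by (simp add: maximal_cell_poly_1_1 coeff_1)
next
  case (Suc_zero r)
  then show ?case by (cases m) (simp_all add: maximal_cell_poly_Suc_1)
next
  case (zero_Suc s)
  then show ?case by (cases m) (simp_all add: maximal_cell_poly_1_Suc)
next
  case (Suc_Suc r s)
  then show ?case
    by (cases m) (simp_all add: maximal_cell_poly_Suc_Suc algebra_simps)
qed

lemma coeff_sum_of_nat_monomials: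
  "coeff (\<Sum>m = 0..k. of_nat (c m) * [:0, 1:] ^ m :: int poly) n = (if n \<le> k then int (c n) else 0)"
  by (simp add: coeff_sum of_nat_poly smult_monom flip: monom_altdef[of 1, simplified])

theorem mainTheorem16:
  fixes r s :: nat
  assumes "1 \<le> r" and "1 \<le> s"
  shows "(\<Sum>C\<in>{C. is_maximal_cell r s C}. ([:-1, 1:] :: int poly) ^ (r + s - length C - 1))
       = (\<Sum>m = 0..min (r - 1) (s - 1).
            of_nat ((r - 1) choose m) * of_nat ((s - 1) choose m) * ([:0, 1:] :: int poly) ^ m)"
proof -
  obtain R S where r: "r = Suc R" and s: "s = Suc S"
    using assms by (metis One_nat_def Suc_le_D)
  have "coeff (\<Sum>m = 0..min R S. of_nat ((R choose m) * (S choose m)) * [:0, 1:] ^ m) n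
      = coeff (maximal_cell_poly r s) n" for n
    unfolding coeff_sum_of_nat_monomials r s coeff_maximal_cell_poly
    by (auto simp: not_le min_less_iff_disj)
  then show ?thesis
    unfolding r s diff_Suc_1 of_nat_mult[symmetric] maximal_cell_poly_def[symmetric]
    by (simp add: poly_eq_iff)
qed

end
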